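(* Let $d\ge1$, $\Theta\subseteq\mathbb{R}$, and let $g:\Theta\to\mathbb{R}$ be continuously differentiable, one-to-one, with $\mathrm{d}g/\mathrm{d}\theta\neq0$ on $\Theta$, applied entrywise. Let $\boldsymbol{\theta}\in\Theta^d$ be a random vector with marginal distribution $p_{\boldsymbol{\theta}}$, let $\mathbf{x}_0=g(\boldsymbol{\theta})$ with distribution $p_{\mathbf{x}_0}$, and for $t\in[\epsilon,1]$ let $p_{\mathbf{x}_t\mid\mathbf{x}_0}(\cdot\mid\mathbf{x}_0)$ be the density of $\mathcal{N}(\sqrt{\alpha_t}\,\mathbf{x}_0,\,v_t\mathbf{I}_d)$, where $\alpha_t=\exp(-\int_0^t\beta(s)\,\mathrm{d}s)$, $v_t=1-\alpha_t$, $\beta:\mathbb{R}\to\mathbb{R}_+$. Let $\mathbf{T}_{\boldsymbol{\theta}}:\Theta^d\to\mathbb{R}^{k}$ be a measurable function and $\boldsymbol{\zeta}:\mathbb{R}^d\to\mathbb{R}^{k}$ a Lipschitz continuous function. Suppose $$\mathbb{E}_{\boldsymbol{\theta}\sim p_{\boldsymbol{\theta}}}\big[\|\mathbf{T}_{\boldsymbol{\theta}}(\boldsymbol{\theta})\|\big]<\infty,\qquad \mathbb{E}_{\boldsymbol{\theta}\sim p_{\boldsymbol{\theta}}}\big[\|g(\boldsymbol{\theta})\|\,\|\mathbf{T}_{\boldsymbol{\theta}}(\boldsymbol{\theta})\|\big]<\infty.$$ Then for all $t\in[\epsilon,1]$, $$\int p_{\mathbf{x}_0}(\mathbf{x}_0)\int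 p_{\mathbf{x}_t\mid\mathbf{x}_0}(\mathbf{x}_t\mid\mathbf{x}_0)\,\big|\boldsymbol{\zeta}(\mathbf{x}_t)^{\top}\mathbf{T}_{\boldsymbol{\theta}}(g^{-1}(\mathbf{x}_0))\big|\,\mathrm{d}\mathbf{x}_t\,\mathrm{d}\mathbf{x}_0<\infty.$$
   Context: $\|\cdot\|$ is the Euclidean norm and $\epsilon>0$ is a small constant. In the paper, $\mathbf{T}_{\boldsymbol{\theta}}$ is the sufficient statistic (valued in $\mathbb{R}^{2d}$) of the natural conjugate prior of a one-parameter exponential-family likelihood, and $\boldsymbol{\zeta}$ gives the hyperparameters of that prior as a function of $\mathbf{x}_t$. *)

theory Defs
  imports "HOL-Probability.Probability"
begin

definition alpha_sched :: "(real \<Rightarrow> real) \<Rightarrow> real \<Rightarrow> real" where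
  "alpha_sched \<beta> t = exp (- (LBINT s=0..t. \<beta> s))"

definition var_sched :: "(real \<Rightarrow> real) \<Rightarrow> real \<Rightarrow> real" where
  "var_sched \<beta> t = 1 - alpha_sched \<beta> t"

definition cond_density :: "(real \<Rightarrow> real) \<Rightarrow> real \<Rightarrow> real ^ 'd \<Rightarrow> real ^ 'd \<Rightarrow> real" where
  "cond_density \<beta> t x0 xt =
     (\<Prod>i\<in>UNIV. normal_density (sqrt (alpha_sched \<beta> t) * x0 $ i) (sqrt (var_sched \<beta> t)) (xt $ i))"

definition entrywise :: "(real \<Rightarrow> real) \<Rightarrow> real ^ 'd \<Rightarrow> real ^ 'd" where
  "entrywise g x = (\<chi> i. g (x $ i))"

end

theory Submission
  imports Defs
begin

text \<open>
  Write \<open>a = \<surd>\<alpha>\<^sub>t\<close>, \<open>\<sigma> = \<surd>v\<^sub>t\<close> and \<open>w = T(g\<^sup>-\<^sup>1 x\<^sub>0)\<close>. By Cauchy-Schwarz and the affine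
  growth \<open>\<parallel>\<zeta> x\<parallel> \<le> \<parallel>\<zeta> 0\<parallel> + L\<parallel>x\<parallel>\<close> of a Lipschitz map, the inner integral is at most
  \<open>\<parallel>w\<parallel> (\<parallel>\<zeta> 0\<parallel> + L d (\<bar>a\<bar> \<parallel>x\<^sub>0\<parallel> + \<bar>\<sigma>\<bar>))\<close>, since a Gaussian has unit mass and first absolute
  moment at most \<open>\<bar>\<mu>\<bar> + \<sigma>\<close> in each coordinate. Pulling back along \<open>x\<^sub>0 = g(\<theta>)\<close>, where
  \<open>g\<^sup>-\<^sup>1(g \<theta>) = \<theta>\<close> almost surely, this bound becomes a combination of the two finite moments.
  The integral against an image measure is bounded by that of the pulled-back integrand even
  for non-measurable integrands.
\<close>

lemma normal_density_abs_sigma: "normal_density \<mu> \<bar>\<sigma>\<bar> = normal_density \<mu> \<sigma>"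
  by (simp add: fun_eq_iff normal_density_def)

lemma normal_density_zero_sigma: "normal_density \<mu> 0 x = 0"
  by (simp add: normal_density_def)

lemma nn_integral_normal_density:
  assumes "0 < \<sigma>"
  shows "(\<integral>\<^sup>+x. ennreal (normal_density \<mu> \<sigma> x) \<partial>lborel) = 1"
  using assms by (subst nn_integral_eq_integral) auto

lemma nn_integral_normal_density_abs_le:
  assumes \<sigma>: "0 < \<sigma>"
  shows "(\<integral>\<^sup>+x. ennreal (normal_density \<mu> \<sigma> x * \<bar>x\<bar>) \<partial>lborel) \<le> ennreal (\<bar>\<mu>\<bar> + \<sigma>)"
proof -
  have centered: "(\<integral>\<^sup>+x. ennreal (normal_density \<mu> \<sigma> x * \<bar>x - \<mu>\<bar>) \<partial>lborel) = ennreal (\<sigma> * sqrt (2 / pi))"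
    using normal_moment_abs_odd[OF \<sigma>, of \<mu> 0]
    by (subst nn_integral_eq_integral) (auto simp: has_bochner_integral_iff)
  have "sqrt (2 / pi) \<le> 1"
    using pi_gt3 by (simp add: real_sqrt_le_1_iff)
  then have "\<sigma> * sqrt (2 / pi) \<le> \<sigma>"
    using \<sigma> by (simp add: mult_left_le)
  have "(\<integral>\<^sup>+x. ennreal (normal_density \<mu> \<sigma> x * \<bar>x\<bar>) \<partial>lborel)
     \<le> (\<integral>\<^sup>+x. ennreal \<bar>\<mu>\<bar> * ennreal (normal_density \<mu> \<sigma> x)
                + ennreal (normal_density \<mu> \<sigma> x * \<bar>x - \<mu>\<bar>) \<partial>lborel)"
  proof (rule nn_integral_mono)
    fix x
    have "normal_density \<mu> \<sigma> x * \<bar>x\<bar> \<le> normal_density \<mu> \<sigma> x * (\<bar>\<mu>\<bar> + \<bar>x - \<mu>\<bar>)"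
      by (intro mult_left_mono) auto
    then show "ennreal (normal_density \<mu> \<sigma> x * \<bar>x\<bar>)
      \<le> ennreal \<bar>\<mu>\<bar> * ennreal (normal_density \<mu> \<sigma> x) + ennreal (normal_density \<mu> \<sigma> x * \<bar>x - \<mu>\<bar>)"
      by (simp add: ennreal_mult'[symmetric] ennreal_plus[symmetric] algebra_simps del: ennreal_plus)
  qed
  also have "\<dots> = ennreal \<bar>\<mu>\<bar> + ennreal (\<sigma> * sqrt (2 / pi))"
    using \<sigma> by (simp add: nn_integral_add nn_integral_cmult nn_integral_normal_density centered)
  also have "\<dots> \<le> ennreal (\<bar>\<mu>\<bar> + \<sigma>)"
    using \<open>\<sigma> * sqrt (2 / pi) \<le> \<sigma>\<close> \<sigma> by (simp add: ennreal_plus[symmetric] del: ennreal_plus)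
  finally show ?thesis .
qed

lemma nn_integral_lborel_prod_cart:
  fixes h :: "'d::finite \<Rightarrow> real \<Rightarrow> ennreal"
  assumes [measurable]: "\<And>i. h i \<in> borel_measurable borel"
  shows "(\<integral>\<^sup>+x. (\<Prod>i\<in>UNIV. h i (x $ i)) \<partial>lborel) = (\<Prod>i\<in>UNIV. \<integral>\<^sup>+x. h i x \<partial>lborel)"
proof -
  have Basis: "(Basis :: (real^'d) set) = range (\<lambda>i. axis i 1)"
    by (auto simp: Basis_vec_def)
  have inj: "inj (\<lambda>i::'d. axis i (1::real))"
    by (auto simp: inj_def axis_eq_axis)
  have "(\<integral>\<^sup>+x. (\<Prod>b\<in>Basis. h (axis_index b) ((x::real^'d) \<bullet> b)) \<partial>lborel)
      = (\<Prod>b\<in>(Basis::(real^'d) set). \<integral>\<^sup>+y. h (axis_index b) y \<partial>lborel)"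
    by (rule nn_integral_lborel_prod) simp_all
  then show ?thesis
    unfolding Basis by (simp add: prod.reindex[OF inj] inner_axis)
qed

definition normal_density_vec :: "real ^ 'd \<Rightarrow> real \<Rightarrow> real ^ 'd \<Rightarrow> real" where
  "normal_density_vec \<mu> \<sigma> x = (\<Prod>i\<in>UNIV. normal_density (\<mu> $ i) \<sigma> (x $ i))"

lemma cond_density_eq_normal_density_vec:
  "cond_density \<beta> t x0 = normal_density_vec (sqrt (alpha_sched \<beta> t) *\<^sub>R x0) (sqrt (var_sched \<beta> t))"
  by (simp add: fun_eq_iff cond_density_def normal_density_vec_def)

lemma normal_density_vec_nonneg [simp]: "0 \<le> normal_density_vec \<mu> \<sigma> x"
  by (simp add: normal_density_vec_def prod_nonneg)

lemma borel_measurable_normal_density_vec [measurable]: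
  "normal_density_vec \<mu> \<sigma> \<in> borel_measurable borel"
  unfolding normal_density_vec_def by measurable

lemma normal_density_vec_abs_sigma: "normal_density_vec \<mu> \<bar>\<sigma>\<bar> = normal_density_vec \<mu> \<sigma>"
  by (simp add: fun_eq_iff normal_density_vec_def normal_density_abs_sigma)

lemma normal_density_vec_zero_sigma: "normal_density_vec \<mu> 0 x = 0"
  by (simp add: normal_density_vec_def normal_density_zero_sigma)

lemma nn_integral_normal_density_vec:
  assumes "0 < \<sigma>"
  shows "(\<integral>\<^sup>+x. ennreal (normal_density_vec \<mu> \<sigma> x) \<partial>lborel) = 1"
  using assms
  by (simp add: normal_density_vec_def prod_ennreal[symmetric] nn_integral_normal_density
      nn_integral_lborel_prod_cart[where h = "\<lambda>i y. ennreal (normal_density (\<mu> $ i) \<sigma> y)"])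

lemma nn_integral_normal_density_vec_abs_component_le:
  fixes \<mu> :: "real ^ 'd"
  assumes \<sigma>: "0 < \<sigma>"
  shows "(\<integral>\<^sup>+x. ennreal (normal_density_vec \<mu> \<sigma> x * \<bar>x $ j\<bar>) \<partial>lborel) \<le> ennreal (\<bar>\<mu> $ j\<bar> + \<sigma>)"
proof -
  define h where "h i y = ennreal (normal_density (\<mu> $ i) \<sigma> y * (if i = j then \<bar>y\<bar> else 1))" for i y
  have "normal_density_vec \<mu> \<sigma> x * \<bar>x $ j\<bar>
      = (\<Prod>i\<in>UNIV. normal_density (\<mu> $ i) \<sigma> (x $ i) * (if i = j then \<bar>x $ i\<bar> else 1))" for x :: "real ^ 'd"
    by (simp add: normal_density_vec_def prod.distrib prod.delta)
  then have "(\<integral>\<^sup>+x. ennreal (normal_density_vec \<mu> \<sigma> x * \<bar>x $ j\<bar>) \<partial>lborel)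
      = (\<integral>\<^sup>+x. (\<Prod>i\<in>UNIV. h i (x $ i)) \<partial>lborel)"
    by (simp add: h_def prod_ennreal)
  also have "\<dots> = (\<Prod>i\<in>UNIV. \<integral>\<^sup>+y. h i y \<partial>lborel)"
    by (rule nn_integral_lborel_prod_cart) (simp add: h_def)
  also have "\<dots> = (\<integral>\<^sup>+y. ennreal (normal_density (\<mu> $ j) \<sigma> y * \<bar>y\<bar>) \<partial>lborel)"
  proof -
    have "(\<integral>\<^sup>+y. h i y \<partial>lborel)
        = (if i = j then \<integral>\<^sup>+y. ennreal (normal_density (\<mu> $ j) \<sigma> y * \<bar>y\<bar>) \<partial>lborel else 1)" for i
      using \<sigma> by (simp add: h_def nn_integral_normal_density)
    then show ?thesis
      by (simp add: prod.delta)
  qed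
  also have "\<dots> \<le> ennreal (\<bar>\<mu> $ j\<bar> + \<sigma>)"
    by (rule nn_integral_normal_density_abs_le[OF \<sigma>])
  finally show ?thesis .
qed

lemma nn_integral_normal_density_vec_norm_le:
  fixes \<mu> :: "real ^ 'd"
  assumes \<sigma>: "0 < \<sigma>"
  shows "(\<integral>\<^sup>+x. ennreal (normal_density_vec \<mu> \<sigma> x * norm x) \<partial>lborel)
    \<le> ennreal (CARD('d) * (norm \<mu> + \<sigma>))"
proof -
  have "(\<integral>\<^sup>+x. ennreal (normal_density_vec \<mu> \<sigma> x * norm x) \<partial>lborel)
      \<le> (\<integral>\<^sup>+x. (\<Sum>j\<in>UNIV. ennreal (normal_density_vec \<mu> \<sigma> x * \<bar>x $ j\<bar>)) \<partial>lborel)"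
  proof (rule nn_integral_mono)
    fix x :: "real ^ 'd"
    have "normal_density_vec \<mu> \<sigma> x * norm x \<le> normal_density_vec \<mu> \<sigma> x * (\<Sum>j\<in>UNIV. \<bar>x $ j\<bar>)"
      by (intro mult_left_mono norm_le_l1_cart) simp
    then show "ennreal (normal_density_vec \<mu> \<sigma> x * norm x)
        \<le> (\<Sum>j\<in>UNIV. ennreal (normal_density_vec \<mu> \<sigma> x * \<bar>x $ j\<bar>))"
      by (simp add: sum_distrib_left ennreal_leI)
  qed
  also have "\<dots> = (\<Sum>j\<in>UNIV. \<integral>\<^sup>+x. ennreal (normal_density_vec \<mu> \<sigma> x * \<bar>x $ j\<bar>) \<partial>lborel)"
    by (rule nn_integral_sum) simp
  also have "\<dots> \<le> (\<Sum>j\<in>(UNIV :: 'd set). ennreal (norm \<mu> + \<sigma>))"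
  proof (rule sum_mono)
    fix j
    have "\<bar>\<mu> $ j\<bar> + \<sigma> \<le> norm \<mu> + \<sigma>"
      by (simp add: component_le_norm_cart)
    with nn_integral_normal_density_vec_abs_component_le[OF \<sigma>, of \<mu> j]
    show "(\<integral>\<^sup>+x. ennreal (normal_density_vec \<mu> \<sigma> x * \<bar>x $ j\<bar>) \<partial>lborel) \<le> ennreal (norm \<mu> + \<sigma>)"
      by (meson ennreal_leI order_trans)
  qed
  also have "\<dots> = ennreal (CARD('d) * (norm \<mu> + \<sigma>))"
    using \<sigma> by (simp add: ennreal_mult' ennreal_of_nat_eq_real_of_nat)
  finally show ?thesis .
qed

lemma lipschitz_on_UNIV_norm_le:
  assumes "L-lipschitz_on UNIV f"
  shows "norm (f x) \<le> norm (f 0) + L * norm x"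
proof -
  have "dist (f x) (f 0) \<le> L * dist x 0"
    using assms by (rule lipschitz_onD) simp_all
  then show ?thesis
    by (metis add.commute add_left_mono diff_zero dist_norm norm_triangle_sub order_trans)
qed

lemma nn_integral_normal_density_vec_inner_lipschitz_le:
  fixes \<mu> :: "real ^ 'd" and \<zeta> :: "real ^ 'd \<Rightarrow> real ^ 'k"
  assumes Lip: "L-lipschitz_on UNIV \<zeta>"
  shows "(\<integral>\<^sup>+x. ennreal (normal_density_vec \<mu> \<sigma> x * \<bar>\<zeta> x \<bullet> w\<bar>) \<partial>lborel)
    \<le> ennreal (norm w * (norm (\<zeta> 0) + L * CARD('d) * (norm \<mu> + \<bar>\<sigma>\<bar>)))"
proof (cases "\<sigma> = 0")
  case True
  \<comment> \<open>\<open>normal_density \<mu> 0\<close> vanishes through division by zero\<close>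
  then show ?thesis
    by (simp add: normal_density_vec_zero_sigma)
next
  case False
  then have \<sigma>: "0 < \<bar>\<sigma>\<bar>" by simp
  have L: "0 \<le> L" using Lip by (rule lipschitz_on_nonneg)
  define D where "D = normal_density_vec \<mu> \<bar>\<sigma>\<bar>"
  have "(\<integral>\<^sup>+x. ennreal (normal_density_vec \<mu> \<sigma> x * \<bar>\<zeta> x \<bullet> w\<bar>) \<partial>lborel)
      \<le> (\<integral>\<^sup>+x. ennreal (norm w * norm (\<zeta> 0)) * ennreal (D x)
                + ennreal (norm w * L) * ennreal (D x * norm x) \<partial>lborel)"
  proof (rule nn_integral_mono)
    fix x
    have "\<bar>\<zeta> x \<bullet> w\<bar> \<le> norm w * (norm (\<zeta> 0) + L * norm x)"
      using Cauchy_Schwarz_ineq2[of "\<zeta> x" w] lipschitz_on_UNIV_norm_le[OF Lip, of x]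
      by (metis mult.commute mult_left_mono norm_ge_zero order_trans)
    then have "D x * \<bar>\<zeta> x \<bullet> w\<bar> \<le> D x * (norm w * (norm (\<zeta> 0) + L * norm x))"
      by (rule mult_left_mono) (simp add: D_def)
    then have "D x * \<bar>\<zeta> x \<bullet> w\<bar> \<le> norm w * norm (\<zeta> 0) * D x + norm w * L * (D x * norm x)"
      by (simp add: algebra_simps)
    then show "ennreal (normal_density_vec \<mu> \<sigma> x * \<bar>\<zeta> x \<bullet> w\<bar>)
        \<le> ennreal (norm w * norm (\<zeta> 0)) * ennreal (D x) + ennreal (norm w * L) * ennreal (D x * norm x)"
      using L by (simp add: D_def normal_density_vec_abs_sigma ennreal_mult'[symmetric]
          ennreal_plus[symmetric] ennreal_leI del: ennreal_plus)
  qed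
  also have "\<dots> = ennreal (norm w * norm (\<zeta> 0)) * (\<integral>\<^sup>+x. ennreal (D x) \<partial>lborel)
      + ennreal (norm w * L) * (\<integral>\<^sup>+x. ennreal (D x * norm x) \<partial>lborel)"
    by (simp add: D_def nn_integral_add nn_integral_cmult)
  also have "\<dots> \<le> ennreal (norm w * norm (\<zeta> 0)) * 1
      + ennreal (norm w * L) * ennreal (CARD('d) * (norm \<mu> + \<bar>\<sigma>\<bar>))"
    unfolding D_def
    by (intro add_mono mult_left_mono nn_integral_normal_density_vec_norm_le[OF \<sigma>])
      (simp_all add: nn_integral_normal_density_vec[OF \<sigma>])
  also have "\<dots> = ennreal (norm w * (norm (\<zeta> 0) + L * CARD('d) * (norm \<mu> + \<bar>\<sigma>\<bar>)))"
    using L by (simp add: ennreal_mult'[symmetric] ennreal_plus[symmetric] algebra_simps del: ennreal_plus)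
  finally show ?thesis .
qed

lemma nn_integral_distr_le:
  assumes "h \<in> measurable M N"
  shows "(\<integral>\<^sup>+y. f y \<partial>distr M N h) \<le> (\<integral>\<^sup>+x. f (h x) \<partial>M)"
  unfolding nn_integral_def[of "distr M N h"]
proof (rule SUP_least)
  fix u assume "u \<in> {u. simple_function (distr M N h) u \<and> u \<le> f}"
  then have u: "simple_function (distr M N h) u" "u \<le> f" by auto
  have "integral\<^sup>S (distr M N h) u = (\<integral>\<^sup>+y. u y \<partial>distr M N h)"
    by (simp add: nn_integral_eq_simple_integral u(1))
  also have "\<dots> = (\<integral>\<^sup>+x. u (h x) \<partial>M)"
    using assms borel_measurable_simple_function[OF u(1)] by (rule nn_integral_distr)
  also have "\<dots> \<le> (\<integral>\<^sup>+x. f (h x) \<partial>M)"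
    using u(2) by (intro nn_integral_mono) (auto simp: le_fun_def)
  finally show "integral\<^sup>S (distr M N h) u \<le> (\<integral>\<^sup>+x. f (h x) \<partial>M)" .
qed

lemma nn_integral_norm_mult_affine_less_top:
  fixes T :: "'a \<Rightarrow> 'b::real_normed_vector" and h :: "'a \<Rightarrow> 'c::real_normed_vector"
  assumes [measurable]: "T \<in> borel_measurable M" "h \<in> borel_measurable M"
    and "0 \<le> A" "0 \<le> B"
    and "(\<integral>\<^sup>+x. ennreal (norm (T x)) \<partial>M) < \<infinity>"
    and "(\<integral>\<^sup>+x. ennreal (norm (h x) * norm (T x)) \<partial>M) < \<infinity>"
  shows "(\<integral>\<^sup>+x. ennreal (norm (T x) * (A + B * norm (h x))) \<partial>M) < \<infinity>"
proof -
  have "(\<integral>\<^sup>+x. ennreal (norm (T x) * (A + B * norm (h x))) \<partial>M)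
      = (\<integral>\<^sup>+x. ennreal A * ennreal (norm (T x)) + ennreal B * ennreal (norm (h x) * norm (T x)) \<partial>M)"
    using assms(3,4) by (intro nn_integral_cong)
      (simp add: ennreal_mult[symmetric] ennreal_plus[symmetric] algebra_simps del: ennreal_plus)
  also have "\<dots> = ennreal A * (\<integral>\<^sup>+x. ennreal (norm (T x)) \<partial>M)
      + ennreal B * (\<integral>\<^sup>+x. ennreal (norm (h x) * norm (T x)) \<partial>M)"
    by (simp add: nn_integral_add nn_integral_cmult)
  also have "\<dots> < \<infinity>"
    using assms(5,6) by (simp add: ennreal_mult_less_top less_top)
  finally show ?thesis .
qed

lemma entrywise_inv_into_entrywise:
  assumes "inj_on g \<Theta>" and "\<forall>i. \<theta> $ i \<in> \<Theta>"
  shows "entrywise (inv_into \<Theta> g) (entrywise g \<theta>) = \<theta>"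
  using assms by (simp add: entrywise_def vec_eq_iff)

theorem lemmaI1:
  fixes \<Theta> :: "real set"
    and g g' :: "real \<Rightarrow> real"
    and P :: "(real ^ 'd) measure"
    and \<beta> :: "real \<Rightarrow> real"
    and T :: "real ^ 'd \<Rightarrow> real ^ 'k"
    and \<zeta> :: "real ^ 'd \<Rightarrow> real ^ 'k"
    and \<epsilon> t :: real
  assumes g_deriv: "\<And>x. x \<in> \<Theta> \<Longrightarrow> (g has_real_derivative g' x) (at x within \<Theta>)"
    and g'_cont: "continuous_on \<Theta> g'"
    and g'_nz: "\<And>x. x \<in> \<Theta> \<Longrightarrow> g' x \<noteq> 0"
    and g_inj: "inj_on g \<Theta>"
    and P_prob: "prob_space P"
    and P_sets: "sets P = sets borel"
    and P_support: "AE \<theta> in P. \<forall>i. \<theta> $ i \<in> \<Theta>"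
    and x0_meas: "entrywise g \<in> borel_measurable P"
    and \<beta>_pos: "\<And>s. \<beta> s > 0"
    and \<beta>_int: "set_integrable lborel {0..1} \<beta>"
    and T_meas: "T \<in> borel_measurable borel"
    and \<zeta>_lip: "\<exists>L. L-lipschitz_on UNIV \<zeta>"
    and mom1: "(\<integral>\<^sup>+ \<theta>. ennreal (norm (T \<theta>)) \<partial>P) < \<infinity>"
    and mom2: "(\<integral>\<^sup>+ \<theta>. ennreal (norm (entrywise g \<theta>) * norm (T \<theta>)) \<partial>P) < \<infinity>"
    and eps_pos: "0 < \<epsilon>"
    and t_range: "t \<in> {\<epsilon>..1}"
  shows "(\<integral>\<^sup>+ x0. (\<integral>\<^sup>+ xt. ennreal (cond_density \<beta> t x0 xt *
            \<bar>\<zeta> xt \<bullet> T (entrywise (inv_into \<Theta> g) x0)\<bar>) \<partial>lborel)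
          \<partial>(distr P borel (entrywise g))) < \<infinity>"
proof -
  obtain L where Lip: "L-lipschitz_on UNIV \<zeta>"
    using \<zeta>_lip by blast
  have L: "0 \<le> L"
    using Lip by (rule lipschitz_on_nonneg)
  define a where "a = sqrt (alpha_sched \<beta> t)"
  define A where "A = norm (\<zeta> 0) + L * CARD('d) * \<bar>sqrt (var_sched \<beta> t)\<bar>"
  define B where "B = L * CARD('d) * \<bar>a\<bar>"
  have "A \<ge> 0" "B \<ge> 0"
    using L by (simp_all add: A_def B_def)
  have inner_le: "(\<integral>\<^sup>+xt. ennreal (cond_density \<beta> t x0 xt * \<bar>\<zeta> xt \<bullet> w\<bar>) \<partial>lborel)
      \<le> ennreal (norm w * (A + B * norm x0))" for x0 w
    using nn_integral_normal_density_vec_inner_lipschitz_le[OF Lip, of "a *\<^sub>R x0" "sqrt (var_sched \<beta> t)" w]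
    by (simp add: cond_density_eq_normal_density_vec a_def A_def B_def algebra_simps)
  have [measurable]: "T \<in> borel_measurable P"
    using T_meas by (simp add: measurable_cong_sets[OF P_sets refl])
  note x0_meas [measurable]
  have "(\<integral>\<^sup>+ x0. (\<integral>\<^sup>+ xt. ennreal (cond_density \<beta> t x0 xt *
            \<bar>\<zeta> xt \<bullet> T (entrywise (inv_into \<Theta> g) x0)\<bar>) \<partial>lborel) \<partial>(distr P borel (entrywise g)))
      \<le> (\<integral>\<^sup>+ x0. ennreal (norm (T (entrywise (inv_into \<Theta> g) x0)) * (A + B * norm x0))
            \<partial>(distr P borel (entrywise g)))"
    by (intro nn_integral_mono inner_le)
  also have "\<dots> \<le> (\<integral>\<^sup>+ \<theta>. ennreal (norm (T (entrywise (inv_into \<Theta> g) (entrywise g \<theta>)))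
                                * (A + B * norm (entrywise g \<theta>))) \<partial>P)"
    using x0_meas by (rule nn_integral_distr_le)
  also have "\<dots> = (\<integral>\<^sup>+ \<theta>. ennreal (norm (T \<theta>) * (A + B * norm (entrywise g \<theta>))) \<partial>P)"
    using P_support by (intro nn_integral_cong_AE) (auto simp: entrywise_inv_into_entrywise[OF g_inj])
  also have "\<dots> < \<infinity>"
    using \<open>A \<ge> 0\<close> \<open>B \<ge> 0\<close> mom1 mom2 by (intro nn_integral_norm_mult_affine_less_top) simp_all
  finally show ?thesis .
qed

end
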